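(* Define the integer sequence $(w_n)_{n\geq 1}$ by $w_1=1$ and, for $n\geq 1$, $$w_{n+1}=\begin{cases}\left\lfloor \sqrt{2}\,\left(w_n+1-\frac{\pi^2}{e^3}\right)\right\rfloor, & n \text{ odd},\\ \left\lfloor \sqrt{2}\,\left(w_n+\tfrac12\right)\right\rfloor, & n \text{ even}.\end{cases}$$ Then for every $n\geq 31$, $w_{2n+1}-2w_{2n-1}$ equals the $(n+1)$th binary digit of $759250125\sqrt{2}$.
   Context: $\lfloor x\rfloor$ denotes the greatest integer $\leq x$. Binary digits of a positive real number are counted from the most significant one: writing $759250125\sqrt{2}=\sum_{j\geq 1} b_j\,2^{30-(j-1)}$ with $b_j\in\{0,1\}$ and $b_1=1$ (the integer part of $759250125\sqrt{2}$ lies in $[2^{30},2^{31})$), the $j$th binary digit is $b_j$. *)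

theory Defs
  imports Complex_Main
begin

text \<open>The sequence w, indexed from 1 (the value at index 0 is irrelevant and set to 0).
  w (n+1) is computed from w n with the case split on the parity of n.\<close>
fun w :: "nat \<Rightarrow> int" where
  "w 0 = 0"
| "w (Suc 0) = 1"
| "w (Suc (Suc m)) =
     (if odd (Suc m)
      then \<lfloor>sqrt 2 * (real_of_int (w (Suc m)) + 1 - pi^2 / exp 3)\<rfloor>
      else \<lfloor>sqrt 2 * (real_of_int (w (Suc m)) + 1/2)\<rfloor>)"

text \<open>The j-th binary digit (j \<ge> 1, counted from the most significant one) of a positive
  real x: writing x = sum_{j\<ge>1} b_j 2^(e-(j-1)) with e = floor(log2 x) and b_1 = 1,
  we have b_j = floor(x * 2^((j-1)-e)) mod 2.\<close>
definition binary_digit :: "real \<Rightarrow> nat \<Rightarrow> int" where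
  "binary_digit x j = \<lfloor>x * 2 powi (int j - 1 - \<lfloor>log 2 x\<rfloor>)\<rfloor> mod 2"

end

theory Submission
  imports Defs "HOL-Analysis.Complex_Transcendental"
begin

text \<open>The map \<open>a \<mapsto> \<lfloor>\<surd>2 (a + c)\<rfloor>\<close> followed by \<open>a \<mapsto> \<lfloor>\<surd>2 (a + 1/2)\<rfloor>\<close> sends
  \<open>\<lfloor>L\<surd>2\<rfloor> + L\<close> to \<open>\<lfloor>2L\<surd>2\<rfloor> + 2L\<close> for every integer L, because \<open>\<surd>2 \<cdot> L\<surd>2 = 2L\<close> and
  the fractional parts are shifted by amounts that stay inside one unit interval.  The first
  61 terms are computed exactly, giving \<open>w 61 = \<lfloor>K\<surd>2\<rfloor> + K\<close> with K = 759250125; hence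
  \<open>w (61 + 2m) = \<lfloor>2\<^sup>m K\<surd>2\<rfloor> + 2\<^sup>m K\<close>, and \<open>w (2n+1) - 2 w (2n-1) = \<lfloor>2y\<rfloor> - 2\<lfloor>y\<rfloor>\<close> for
  \<open>y = 2\<^bsup>n-31\<^esup> K\<surd>2\<close> is the (n+1)th binary digit of K\<surd>2.\<close>

definition odd_shift :: real where
  "odd_shift = 1 - pi^2 / exp 3"

lemma w_Suc_odd: "odd m \<Longrightarrow> w (Suc m) = \<lfloor>sqrt 2 * (real_of_int (w m) + odd_shift)\<rfloor>"
  by (cases m) (auto simp: odd_shift_def algebra_simps)

lemma w_Suc_even: "even m \<Longrightarrow> m \<noteq> 0 \<Longrightarrow> w (Suc m) = \<lfloor>sqrt 2 * (real_of_int (w m) + 1/2)\<rfloor>"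
  by (cases m) auto

lemma odd_shift_bounds: "0.502 \<le> odd_shift" "odd_shift \<le> 0.51"
proof -
  have pi: "3.141592653588 \<le> pi" "pi \<le> 3.1415926535899" by (rule pi_approx)+
  have "\<bar>exp 1 - 5837465777 / 2147483648\<bar> \<le> (inverse (2 ^ 32) :: real)" by (rule e_approx_32)
  then have e: "2.718 \<le> exp (1::real)" "exp (1::real) \<le> 2.7183"
    unfolding abs_le_iff by auto
  have exp3: "exp (3::real) = exp 1 ^ 3"
    by (metis exp_of_nat_mult mult.right_neutral of_nat_numeral)
  have "2.718^3 \<le> exp (1::real)^3" "exp (1::real)^3 \<le> 2.7183^3"
    using e by (simp_all add: power_mono)
  moreover have "(20.079::real) \<le> 2.718^3" "(2.7183::real)^3 \<le> 20.087"
    by (simp_all add: eval_nat_numeral)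
  ultimately have exp3_bounds: "20.079 \<le> exp (3::real)" "exp (3::real) \<le> 20.087"
    using exp3 by linarith+
  have pi2_bounds: "9.8696 \<le> pi^2" "pi^2 \<le> 9.8697"
    using power_mono[OF pi(1), of 2] power_mono[OF pi(2), of 2] by (simp_all add: eval_nat_numeral)
  have "pi^2 / exp 3 \<le> 9.8697 / 20.079" "9.8696 / 20.087 \<le> pi^2 / exp 3"
    using pi2_bounds exp3_bounds by (intro frac_le; simp)+
  then show "0.502 \<le> odd_shift" "odd_shift \<le> 0.51"
    unfolding odd_shift_def by simp_all
qed

lemma le_sqrt2_mult:
  fixes a x :: real
  assumes "0 \<le> a" "x\<^sup>2 \<le> 2 * a\<^sup>2"
  shows "x \<le> sqrt 2 * a"
proof -
  have "sqrt 2 * a = sqrt (2 * a\<^sup>2)" using assms(1) by (simp add: real_sqrt_mult)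
  then show ?thesis using assms(2) by (simp add: real_le_rsqrt)
qed

lemma sqrt2_mult_less:
  fixes a x :: real
  assumes "0 \<le> a" "0 \<le> x" "2 * a\<^sup>2 < x\<^sup>2"
  shows "sqrt 2 * a < x"
proof -
  have "sqrt 2 * a = sqrt (2 * a\<^sup>2)" using assms(1) by (simp add: real_sqrt_mult)
  then show ?thesis using assms(2,3) by (simp add: real_less_lsqrt)
qed

lemma sqrt2_bounds: "1.414 \<le> sqrt (2::real)" "sqrt (2::real) \<le> 1.4143"
  using le_sqrt2_mult[of 1 "1.414"] sqrt2_mult_less[of 1 "1.4143"] by (simp_all add: power2_eq_square)

lemma floor_sqrt2_mult_eqI:
  fixes a c lo hi :: real and k :: int
  assumes "lo \<le> c" "c \<le> hi" "0 \<le> a + lo" "0 \<le> k"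
    and "(real_of_int k)\<^sup>2 \<le> 2 * (a + lo)\<^sup>2" "2 * (a + hi)\<^sup>2 < (real_of_int k + 1)\<^sup>2"
  shows "\<lfloor>sqrt 2 * (a + c)\<rfloor> = k"
proof -
  have "real_of_int k \<le> sqrt 2 * (a + lo)" using assms by (intro le_sqrt2_mult) auto
  also have "\<dots> \<le> sqrt 2 * (a + c)" using assms(1) by (simp add: mult_left_mono)
  finally have lower: "real_of_int k \<le> sqrt 2 * (a + c)" .
  have "sqrt 2 * (a + c) \<le> sqrt 2 * (a + hi)" using assms(2) by (simp add: mult_left_mono)
  also have "\<dots> < real_of_int k + 1" using assms by (intro sqrt2_mult_less) auto
  finally show ?thesis using lower by (simp add: floor_eq_iff)
qed

text \<open>Integer form of \<open>k\<^sup>2 \<le> 2 (a + c)\<^sup>2 < (k + 1)\<^sup>2\<close>, which forces \<open>\<lfloor>\<surd>2 (a + c)\<rfloor> = k\<close>;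
  for odd m it is required for the whole range \<open>0.502 \<le> c \<le> 0.51\<close> of the shift.\<close>
definition w_step_ok :: "nat \<Rightarrow> int \<Rightarrow> int \<Rightarrow> bool" where
  "w_step_ok m a k \<longleftrightarrow> 0 \<le> a \<and> 0 \<le> k \<and>
     (if odd m then 500000 * k\<^sup>2 \<le> (1000 * a + 502)\<^sup>2 \<and> (1000 * a + 510)\<^sup>2 < 500000 * (k + 1)\<^sup>2
      else 2 * k\<^sup>2 \<le> (2 * a + 1)\<^sup>2 \<and> (2 * a + 1)\<^sup>2 < 2 * (k + 1)\<^sup>2)"

lemma w_Suc_eqI:
  assumes "m \<noteq> 0" "w m = a" "w_step_ok m a k"
  shows "w (Suc m) = k"
proof (cases "odd m")
  case True
  then have "500000 * k\<^sup>2 \<le> (1000 * a + 502)\<^sup>2" "(1000 * a + 510)\<^sup>2 < 500000 * (k + 1)\<^sup>2"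
    using assms(3) unfolding w_step_ok_def by simp_all
  then have "500000 * (real_of_int k)\<^sup>2 \<le> (1000 * real_of_int a + 502)\<^sup>2"
    "(1000 * real_of_int a + 510)\<^sup>2 < 500000 * (real_of_int k + 1)\<^sup>2"
    by (simp_all flip: of_int_le_iff[where 'a=real] of_int_less_iff[where 'a=real])
  then have "(real_of_int k)\<^sup>2 \<le> 2 * (real_of_int a + 0.502)\<^sup>2"
    "2 * (real_of_int a + 0.51)\<^sup>2 < (real_of_int k + 1)\<^sup>2"
    by (simp_all add: power2_eq_square algebra_simps)
  then have "\<lfloor>sqrt 2 * (real_of_int a + odd_shift)\<rfloor> = k"
    using assms(3) odd_shift_bounds unfolding w_step_ok_def by (intro floor_sqrt2_mult_eqI) auto
  then show ?thesis using True assms(2) by (simp add: w_Suc_odd)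
next
  case False
  then have "2 * k\<^sup>2 \<le> (2 * a + 1)\<^sup>2" "(2 * a + 1)\<^sup>2 < 2 * (k + 1)\<^sup>2"
    using assms(3) unfolding w_step_ok_def by simp_all
  then have "2 * (real_of_int k)\<^sup>2 \<le> (2 * real_of_int a + 1)\<^sup>2"
    "(2 * real_of_int a + 1)\<^sup>2 < 2 * (real_of_int k + 1)\<^sup>2"
    by (simp_all flip: of_int_le_iff[where 'a=real] of_int_less_iff[where 'a=real])
  then have "(real_of_int k)\<^sup>2 \<le> 2 * (real_of_int a + 1/2)\<^sup>2"
    "2 * (real_of_int a + 1/2)\<^sup>2 < (real_of_int k + 1)\<^sup>2"
    by (simp_all add: power2_eq_square algebra_simps)
  then have "\<lfloor>sqrt 2 * (real_of_int a + 1/2)\<rfloor> = k"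
    using assms(3) unfolding w_step_ok_def by (intro floor_sqrt2_mult_eqI) auto
  then show ?thesis using False assms(1,2) by (simp add: w_Suc_even)
qed

fun w_chain_ok :: "nat \<Rightarrow> int list \<Rightarrow> bool" where
  "w_chain_ok m (a # k # ks) \<longleftrightarrow> w_step_ok m a k \<and> w_chain_ok (Suc m) (k # ks)"
| "w_chain_ok m _ \<longleftrightarrow> True"

lemma w_chain_last:
  "w_chain_ok m (a # ks) \<Longrightarrow> m \<noteq> 0 \<Longrightarrow> w m = a \<Longrightarrow> w (m + length ks) = last (a # ks)"
proof (induction ks arbitrary: m a)
  case (Cons k ks)
  then have "w (Suc m) = k" by (auto intro: w_Suc_eqI)
  with Cons show ?case by fastforce
qed simp

lemma w_61: "w 61 = 1832991949"
proof -
  have "w_chain_ok 1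
   [1, 2, 3, 4, 6, 9, 13, 19, 27, 38, 54, 77, 109, 154, 218, 309, 437, 618, 874, 1236, 1748,
     2472, 3496, 4944, 6992, 9888, 13984, 19777, 27969, 39554, 55938, 79108, 111876,
     158217, 223753, 316435, 447507, 632871, 895015, 1265743, 1790031, 2531486, 3580062,
     5062972, 7160124, 10125945, 14320249, 20251891, 28640499, 40503782, 57280998,
     81007564, 114561996, 162015129, 229123993, 324030259, 458247987, 648060518,
     916495974, 1296121037, 1832991949]"
    by (simp add: w_step_ok_def)
  from w_chain_last[OF this] show ?thesis
    by (simp del: w.simps add: w.simps(2) numeral_eq_Suc)
qed

lemma floor_sqrt2_odd_step:
  fixes L :: int and c :: real
  assumes "sqrt 2 * c < 1" "sqrt 2 * (1 - c) \<le> 1"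
  shows "\<lfloor>sqrt 2 * (real_of_int (\<lfloor>L * sqrt 2\<rfloor> + L) + c)\<rfloor> = \<lfloor>L * sqrt 2\<rfloor> + 2 * L"
proof -
  define f where "f = frac (L * sqrt 2)"
  have f: "0 \<le> f" "f < 1" unfolding f_def by (simp_all add: frac_lt_1)
  have "sqrt 2 * (real_of_int (\<lfloor>L * sqrt 2\<rfloor> + L) + c)
      = real_of_int (\<lfloor>L * sqrt 2\<rfloor> + 2 * L) + ((1 - sqrt 2) * f + sqrt 2 * c)"
    unfolding f_def frac_def by (simp add: algebra_simps)
  moreover have "(1 - sqrt 2) * f \<le> 0" using f by (simp add: mult_nonpos_nonneg)
  moreover have "(1 - sqrt 2) * 1 \<le> (1 - sqrt 2) * f" using f by (simp add: mult_left_mono_neg)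
  ultimately show ?thesis using assms by (simp add: floor_eq_iff algebra_simps)
qed

lemma floor_sqrt2_affine_eq_floor_double:
  fixes f :: real
  assumes "0 \<le> f" "f < 1"
  shows "\<lfloor>(2 - sqrt 2) * f + sqrt 2 / 2\<rfloor> = \<lfloor>2 * f\<rfloor>"
proof (cases "f < 1/2")
  case True
  have "(2 - sqrt 2) * f < (2 - sqrt 2) * (1/2)" using True sqrt2_bounds by (intro mult_strict_left_mono) auto
  moreover have "0 \<le> (2 - sqrt 2) * f" using assms sqrt2_bounds by simp
  ultimately have "\<lfloor>(2 - sqrt 2) * f + sqrt 2 / 2\<rfloor> = 0" by (simp add: floor_eq_iff)
  moreover have "\<lfloor>2 * f\<rfloor> = 0" using True assms by (simp add: floor_eq_iff)
  ultimately show ?thesis by simp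
next
  case False
  have "(2 - sqrt 2) * (1/2) \<le> (2 - sqrt 2) * f" using False sqrt2_bounds by (intro mult_left_mono) auto
  moreover have "(2 - sqrt 2) * f < (2 - sqrt 2) * 1" using assms sqrt2_bounds by (intro mult_strict_left_mono) auto
  ultimately have "\<lfloor>(2 - sqrt 2) * f + sqrt 2 / 2\<rfloor> = 1"
    using sqrt2_bounds by (simp add: floor_eq_iff algebra_simps)
  moreover have "\<lfloor>2 * f\<rfloor> = 1" using False assms by (simp add: floor_eq_iff)
  ultimately show ?thesis by simp
qed

lemma floor_sqrt2_even_step:
  fixes L :: int
  shows "\<lfloor>sqrt 2 * (real_of_int (\<lfloor>L * sqrt 2\<rfloor> + 2 * L) + 1/2)\<rfloor> = \<lfloor>(2 * L) * sqrt 2\<rfloor> + 2 * L"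
proof -
  define f where "f = frac (L * sqrt 2)"
  have f: "0 \<le> f" "f < 1" unfolding f_def by (simp_all add: frac_lt_1)
  have "sqrt 2 * (real_of_int (\<lfloor>L * sqrt 2\<rfloor> + 2 * L) + 1/2)
      = real_of_int (2 * \<lfloor>L * sqrt 2\<rfloor> + 2 * L) + ((2 - sqrt 2) * f + sqrt 2 / 2)"
    unfolding f_def frac_def by (simp add: algebra_simps)
  then have lhs: "\<lfloor>sqrt 2 * (real_of_int (\<lfloor>L * sqrt 2\<rfloor> + 2 * L) + 1/2)\<rfloor>
      = 2 * \<lfloor>L * sqrt 2\<rfloor> + 2 * L + \<lfloor>(2 - sqrt 2) * f + sqrt 2 / 2\<rfloor>"
    by (simp only: int_add_floor)
  have "(2 * L) * sqrt 2 = real_of_int (2 * \<lfloor>L * sqrt 2\<rfloor>) + 2 * f"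
    unfolding f_def frac_def by (simp add: algebra_simps)
  then have rhs: "\<lfloor>(2 * L) * sqrt 2\<rfloor> = 2 * \<lfloor>L * sqrt 2\<rfloor> + \<lfloor>2 * f\<rfloor>"
    by (simp only: int_add_floor)
  show ?thesis unfolding lhs rhs floor_sqrt2_affine_eq_floor_double[OF f] by simp
qed

lemma w_Beatty_step:
  fixes L :: int
  assumes "odd m" "w m = \<lfloor>L * sqrt 2\<rfloor> + L"
  shows "w (m + 2) = \<lfloor>(2 * L) * sqrt 2\<rfloor> + 2 * L"
proof -
  have "sqrt 2 * odd_shift \<le> 1.4143 * 0.51" "sqrt 2 * (1 - odd_shift) \<le> 1.4143 * 0.498"
    using sqrt2_bounds odd_shift_bounds by (intro mult_mono; simp)+
  then have "w (Suc m) = \<lfloor>L * sqrt 2\<rfloor> + 2 * L"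
    using assms floor_sqrt2_odd_step[of odd_shift L] by (simp add: w_Suc_odd)
  then show ?thesis
    using assms(1) floor_sqrt2_even_step[of L] by (simp add: w_Suc_even)
qed

lemma w_61_Beatty: "w 61 = \<lfloor>759250125 * sqrt 2\<rfloor> + 759250125"
proof -
  have "1073741824 \<le> 759250125 * sqrt (2::real)" "759250125 * sqrt (2::real) < 1073741825"
    using le_sqrt2_mult[of 759250125 1073741824] sqrt2_mult_less[of 759250125 1073741825]
    by (simp_all add: power2_eq_square mult.commute)
  then have "\<lfloor>759250125 * sqrt (2::real)\<rfloor> = 1073741824" by (simp add: floor_eq_iff)
  then show ?thesis by (simp add: w_61)
qed

lemma w_closed_form:
  "w (61 + 2 * m) = \<lfloor>(759250125 * 2 ^ m) * sqrt 2\<rfloor> + 759250125 * 2 ^ m"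
proof (induction m)
  case 0
  show ?case using w_61_Beatty by simp
next
  case (Suc m)
  have "w (61 + 2 * m + 2) = \<lfloor>real_of_int (2 * (759250125 * 2 ^ m)) * sqrt 2\<rfloor> + 2 * (759250125 * 2 ^ m)"
    using Suc.IH by (intro w_Beatty_step) simp_all
  then show ?case by (simp add: algebra_simps)
qed

lemma floor_double_minus_double_floor:
  fixes y :: real
  shows "\<lfloor>2 * y\<rfloor> - 2 * \<lfloor>y\<rfloor> = \<lfloor>2 * y\<rfloor> mod 2"
proof -
  have "\<lfloor>2 * y\<rfloor> = 2 * \<lfloor>y\<rfloor> \<or> \<lfloor>2 * y\<rfloor> = 2 * \<lfloor>y\<rfloor> + 1"
    by (simp add: floor_eq_iff) linarith
  then show ?thesis by auto
qed

lemma binary_digit_eq: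
  fixes x :: real and e j :: nat
  assumes "2 ^ e \<le> x" "x < 2 ^ (e + 1)" "e < j"
  shows "binary_digit x j = \<lfloor>x * 2 ^ (j - 1 - e)\<rfloor> mod 2"
proof -
  have "x > 0" using assms(1) zero_less_power[of "2::real" e] by linarith
  then have "\<lfloor>log 2 x\<rfloor> = int e"
    using assms(1,2) by (subst floor_log_eq_powr_iff) (simp_all add: powr_add powr_realpow)
  then have "int j - 1 - \<lfloor>log 2 x\<rfloor> = int (j - 1 - e)" using assms(3) by simp
  then show ?thesis unfolding binary_digit_def by (simp only: power_int_of_nat)
qed

theorem corollary3p3:
  fixes n :: nat
  assumes "n \<ge> 31"
  shows "w (2*n+1) - 2 * w (2*n-1) = binary_digit (759250125 * sqrt 2) (n+1)"
proof -
  obtain m where n: "n = m + 31" using assms le_Suc_ex by (metis add.commute)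
  define x :: real where "x = 759250125 * sqrt 2"
  define y where "y = 2 ^ m * x"
  have "2 ^ 30 \<le> x" "x < 2 ^ 31"
    unfolding x_def using le_sqrt2_mult[of 759250125 "2 ^ 30"] sqrt2_mult_less[of 759250125 "2 ^ 31"]
    by (simp_all add: power2_eq_square mult.commute)
  then have digit: "binary_digit x (n + 1) = \<lfloor>2 * y\<rfloor> mod 2"
    using binary_digit_eq[of 30 x "n + 1"] unfolding n y_def by (simp add: algebra_simps)
  have "w (2*n-1) = \<lfloor>y\<rfloor> + 759250125 * 2 ^ m"
    using w_closed_form[of m] unfolding n y_def x_def by (simp add: algebra_simps)
  moreover have "w (2*n+1) = \<lfloor>2 * y\<rfloor> + 2 * (759250125 * 2 ^ m)"
    using w_closed_form[of "Suc m"] unfolding n y_def x_def by (simp add: algebra_simps)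
  ultimately show ?thesis
    using digit floor_double_minus_double_floor[of y] unfolding x_def by simp
qed

end
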